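(* Let $K$ be a sequence with continuous leading block distribution under $\mathcal F$-expansion, with associated function $f_K^*$. Let $\mu\in\mathcal F^*$ with $\mu(1)=1$ such that there is $t\in\mathbb{N}$ with $\mu(k)=0$ for all $k>t$. Then $$f_K^*\big(\phi(\mu|t\cdot\widehat F-1)\big)\le\lim_{n\to\infty}\frac{\#\{k\le n:\mathrm{LB}_t(K_k)\le\mu|t\}}{n}.$$
   Context: $F$: $F_1=1,F_2=2,F_{n+2}=F_{n+1}+F_n$; $\phi$ golden ratio, $\omega=\phi^{-1}$. Zeckendorf expansion $m=\sum_{k=1}^M\epsilon(k)F_{M-k+1}$ (unique, $\epsilon(k)\in\{0,1\}$, $\epsilon(1)=1$, $\epsilon(k)\epsilon(k+1)=0$); $\mathrm{LB}_s(m)=(\epsilon(1),\dots,\epsilon(s))$ if $M\ge s$. Blocks of equal length are compared lexicographically (equivalently by $\mathbf b\cdot\widehat F:=\sum_k\mathbf b(k)\omega^{k-1}$). $\mathcal F^*$: infinite 0/1 sequences $\mu$ with $\mu(k)\mu(k+1)=0$ and no tail equal to $(1,0,1,0,\dots)$; $\mu|s=(\mu(1),\dots,\mu(s))$, $\mu\cdot\widehat F=\sum_{k\ge1}\mu(k)\omega^{k-1}$. The map $\mu\mapsto\phi(\mu\cdot\widehat F-1)$ is a bijection from $\{\mu\in\mathcal F^*:\mu(1)=1\}$ onto $(0,1)$. A sequence $K$ of positive integers approaching $\infty$ has continuous leading block distribution under $\mathcal F$-expansion if: for every $s\ge2$ and every leading block $\mathbf b$ of length $s$ the limit $\lim_n\#\{k\le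 n:\mathrm{LB}_s(K_k)=\mathbf b\}/n$ exists; for every $\mu\in\mathcal F^*$ with $\mu(1)=1$ the limit $\lim_{s\to\infty}\lim_n\#\{k\le n:\mathrm{LB}_s(K_k)\le\mu|s\}/n$ exists; and the function $f_K^*:[0,1]\to[0,1]$ with $f_K^*(0)=0$, $f_K^*(1)=1$, $f_K^*(\phi(\mu\cdot\widehat F-1))$ equal to that limit, is continuous and increasing. *)

theory Defs
  imports Complex_Main
begin

text \<open>Fibonacci numbers with F 1 = 1, F 2 = 2 (F 0 = 1 is an unused auxiliary value).\<close>
fun fibF :: "nat \<Rightarrow> nat" where
  "fibF 0 = 1"
| "fibF (Suc 0) = 1"
| "fibF (Suc (Suc n)) = fibF (Suc n) + fibF n"

definition gphi :: real where "gphi = (1 + sqrt 5) / 2"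
definition gomega :: real where "gomega = 1 / gphi"

text \<open>Zeckendorf expansion: list eps = [eps(1),...,eps(M)] (0-based list positions).\<close>
definition zeck_rep :: "nat \<Rightarrow> nat list \<Rightarrow> bool" where
  "zeck_rep m eps \<longleftrightarrow> eps \<noteq> [] \<and> eps ! 0 = 1 \<and> set eps \<subseteq> {0, 1} \<and>
     (\<forall>k. Suc k < length eps \<longrightarrow> eps ! k * eps ! Suc k = 0) \<and>
     m = (\<Sum>k<length eps. eps ! k * fibF (length eps - k))"

definition zeck :: "nat \<Rightarrow> nat list" where
  "zeck m = (THE eps. zeck_rep m eps)"

definition has_LB :: "nat \<Rightarrow> nat \<Rightarrow> bool" where
  "has_LB s m \<longleftrightarrow> s \<le> length (zeck m)"

definition LB :: "nat \<Rightarrow> nat \<Rightarrow> nat list" where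
  "LB s m = take s (zeck m)"

definition is_leading_block :: "nat \<Rightarrow> nat list \<Rightarrow> bool" where
  "is_leading_block s b \<longleftrightarrow> (\<exists>m. has_LB s m \<and> LB s m = b)"

definition blk_le :: "nat list \<Rightarrow> nat list \<Rightarrow> bool" where
  "blk_le b c \<longleftrightarrow> b = c \<or> (\<exists>i < length b. take i b = take i c \<and> b ! i < c ! i)"

text \<open>b \<cdot> Fhat = sum_k b(k) omega^(k-1).\<close>
definition blk_val :: "nat list \<Rightarrow> real" where
  "blk_val b = (\<Sum>k<length b. real (b ! k) * gomega ^ k)"

text \<open>F*: sequences mu(1), mu(2), ... (index 0 is normalised to 0 and unused).\<close>
definition Fstar :: "(nat \<Rightarrow> nat) set" where
  "Fstar = {mu. mu 0 = 0 \<and> (\<forall>k\<ge>1. mu k \<in> {0, 1}) \<and> (\<forall>k\<ge>1. mu k * mu (Suc k) = 0) \<and>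
     \<not> (\<exists>j\<ge>1. \<forall>i. mu (j + 2 * i) = 1 \<and> mu (j + 2 * i + 1) = 0)}"

definition restr :: "(nat \<Rightarrow> nat) \<Rightarrow> nat \<Rightarrow> nat list" where
  "restr mu s = map mu [1..<Suc s]"

definition seq_val :: "(nat \<Rightarrow> nat) \<Rightarrow> real" where
  "seq_val mu = (\<Sum>k. real (mu (Suc k)) * gomega ^ k)"

definition cnt_eq :: "(nat \<Rightarrow> nat) \<Rightarrow> nat \<Rightarrow> nat list \<Rightarrow> nat \<Rightarrow> nat" where
  "cnt_eq K s b n = card {k \<in> {1..n}. has_LB s (K k) \<and> LB s (K k) = b}"

definition cnt_le :: "(nat \<Rightarrow> nat) \<Rightarrow> nat \<Rightarrow> nat list \<Rightarrow> nat \<Rightarrow> nat" where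
  "cnt_le K s b n = card {k \<in> {1..n}. has_LB s (K k) \<and> blk_le (LB s (K k)) b}"

definition limfun :: "(nat \<Rightarrow> nat) \<Rightarrow> (nat \<Rightarrow> nat) \<Rightarrow> real" where
  "limfun K mu = lim (\<lambda>s. lim (\<lambda>n. real (cnt_le K s (restr mu s) n) / real n))"

definition fKstar :: "(nat \<Rightarrow> nat) \<Rightarrow> real \<Rightarrow> real" where
  "fKstar K x = (if x = 0 then 0 else if x = 1 then 1 else
     limfun K (THE mu. mu \<in> Fstar \<and> mu 1 = 1 \<and> gphi * (seq_val mu - 1) = x))"

definition cont_LBD :: "(nat \<Rightarrow> nat) \<Rightarrow> bool" where
  "cont_LBD K \<longleftrightarrow>
     (\<forall>k\<ge>1. K k > 0) \<and> filterlim K at_top sequentially \<and>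
     (\<forall>s\<ge>2. \<forall>b. is_leading_block s b \<longrightarrow>
        convergent (\<lambda>n. real (cnt_eq K s b n) / real n)) \<and>
     (\<forall>mu\<in>Fstar. mu 1 = 1 \<longrightarrow>
        convergent (\<lambda>s. lim (\<lambda>n. real (cnt_le K s (restr mu s) n) / real n))) \<and>
     continuous_on {0..1} (fKstar K) \<and> mono_on {0..1} (fKstar K)"

end

theory Submission
  imports Defs
begin

text \<open>
  Shortening the leading block can only make the comparison with \<open>\<mu>|s\<close> easier, so the
  frequency of \<open>LB\<^sub>s(K\<^sub>k) \<le> \<mu>|s\<close> is antitone in \<open>s\<close>; its limit as \<open>s \<rightarrow> \<infinity>\<close>
  is \<open>f\<^sub>K\<^sup>*\<close> at \<open>\<phi>(\<mu>\<cdot>F - 1)\<close>, and \<open>\<mu>\<cdot>F = \<mu>|t\<cdot>F\<close> because \<open>\<mu>\<close> vanishes beyond \<open>t\<close>. All frequencies at length \<open>s \<ge> 1\<close> converge, since the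
  frequency of the blocks below \<open>b\<close> is a finite sum of frequencies of single leading blocks
  (finite because, by Zeckendorf's theorem, leading blocks are 0/1 words). And the point
  \<open>\<phi>(\<mu>\<cdot>F - 1)\<close> determines \<open>\<mu>\<close>: a tail of an \<open>F\<^sup>*\<close> sequence has value below \<open>1 + \<omega>\<close>
  (the bound is approached only by the excluded tail 1010...), so a tail starting with 0 has
  value \<open>< 1\<close> and one starting with 1 has value \<open>\<ge> 1\<close>, which recovers the digits one by one.
\<close>

section \<open>Zeckendorf representations\<close>

lemma fibF_pos: "0 < fibF n"
  by (induction n rule: fibF.induct) auto

lemma mono_fibF: "mono fibF"
proof (rule incseq_SucI)
  fix n show "fibF n \<le> fibF (Suc n)"
    by (cases n) auto
qed

lemma Suc_le_fibF: "Suc n \<le> fibF (Suc n)"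
proof (induction n)
  case (Suc n)
  then show ?case using fibF_pos[of n] by simp
qed simp

fun zeck_val :: "nat list \<Rightarrow> nat" where
  "zeck_val [] = 0"
| "zeck_val (x # xs) = x * fibF (Suc (length xs)) + zeck_val xs"

fun zeck_adm :: "nat list \<Rightarrow> bool" where
  "zeck_adm [] = True"
| "zeck_adm [x] = (x \<le> 1)"
| "zeck_adm (x # y # ys) = (x \<le> 1 \<and> x * y = 0 \<and> zeck_adm (y # ys))"

lemma zeck_adm_iff_nth:
  "zeck_adm xs \<longleftrightarrow> set xs \<subseteq> {0, 1} \<and> (\<forall>k. Suc k < length xs \<longrightarrow> xs ! k * xs ! Suc k = 0)"
proof (induction xs rule: zeck_adm.induct)
  case (3 x y ys)
  have "(\<forall>k. Suc k < length (x # y # ys) \<longrightarrow> (x # y # ys) ! k * (x # y # ys) ! Suc k = 0) \<longleftrightarrow>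
        x * y = 0 \<and> (\<forall>k. Suc k < length (y # ys) \<longrightarrow> (y # ys) ! k * (y # ys) ! Suc k = 0)"
    by (simp add: All_less_Suc2)
  then show ?case using "3.IH" by auto
qed auto

lemma zeck_adm_Cons_0 [simp]: "zeck_adm (0 # xs) = zeck_adm xs"
  by (cases xs) auto

lemma zeck_adm_Cons: "zeck_adm (x # xs) \<Longrightarrow> zeck_adm xs"
  by (cases xs) auto

lemma zeck_val_less: "zeck_adm xs \<Longrightarrow> zeck_val xs < fibF (Suc (length xs))"
proof (induction xs rule: induct_list012)
  case (3 x y ys)
  show ?case
  proof (cases "x = 0")
    case True
    then show ?thesis using 3 monoD[OF mono_fibF, of "Suc (length (y # ys))" "Suc (Suc (length (y # ys)))"]
      by simp
  next
    case False
    then have "x = 1" "y = 0" "zeck_adm ys" using "3.prems" by (auto simp: zeck_adm_Cons)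
    then show ?thesis using 3 by simp
  qed
qed simp_all

lemma zeck_val_inj:
  "length xs = length ys \<Longrightarrow> zeck_adm xs \<Longrightarrow> zeck_adm ys \<Longrightarrow> zeck_val xs = zeck_val ys \<Longrightarrow> xs = ys"
proof (induction xs ys rule: list_induct2)
  case (Cons x xs y ys)
  have "zeck_adm xs" "zeck_adm ys" "x \<le> 1" "y \<le> 1"
    using Cons.prems by (auto simp: zeck_adm_Cons elim: zeck_adm.elims)
  moreover from this have "x = y"
    using Cons.hyps(1) Cons.prems(3) zeck_val_less[of xs] zeck_val_less[of ys]
    by (cases x; cases y) auto
  ultimately show ?case using Cons by simp
qed simp

lemma zeck_val_surj: "m < fibF (Suc M) \<Longrightarrow> \<exists>xs. length xs = M \<and> zeck_adm xs \<and> zeck_val xs = m"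
proof (induction M arbitrary: m rule: fibF.induct)
  case 1
  then show ?case by simp
next
  case 2
  then show ?case by (intro exI[of _ "[m]"]) simp
next
  case (3 n)
  show ?case
  proof (cases "m < fibF (Suc (Suc n))")
    case True
    then obtain xs where "length xs = Suc n" "zeck_adm xs" "zeck_val xs = m"
      using "3.IH"(1) by blast
    then show ?thesis by (intro exI[of _ "0 # xs"]) simp
  next
    case False
    moreover have "m - fibF (Suc (Suc n)) < fibF (Suc n)"
      using False "3.prems" by simp
    ultimately obtain xs where "length xs = n" "zeck_adm xs" "zeck_val xs = m - fibF (Suc (Suc n))"
      using "3.IH"(2) by blast
    then show ?thesis using False by (intro exI[of _ "1 # 0 # xs"]) simp
  qed
qed

lemma zeck_val_dropWhile_0 [simp]: "zeck_val (dropWhile ((=) 0) xs) = zeck_val xs"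
  by (induction xs) auto

lemma zeck_adm_dropWhile_0: "zeck_adm xs \<Longrightarrow> zeck_adm (dropWhile ((=) 0) xs)"
  by (induction xs) (auto dest: zeck_adm_Cons)

lemma zeck_val_sum: "zeck_val xs = (\<Sum>k<length xs. xs ! k * fibF (length xs - k))"
proof (induction xs)
  case (Cons x xs)
  then show ?case unfolding length_Cons sum.lessThan_Suc_shift by simp
qed simp

lemma zeck_rep_iff: "zeck_rep m xs \<longleftrightarrow> xs \<noteq> [] \<and> xs ! 0 = 1 \<and> zeck_adm xs \<and> m = zeck_val xs"
  unfolding zeck_rep_def zeck_adm_iff_nth zeck_val_sum by auto

lemma zeck_rep_exists: "0 < m \<Longrightarrow> \<exists>xs. zeck_rep m xs"
proof -
  assume "0 < m"
  obtain xs where xs: "zeck_adm xs" "zeck_val xs = m"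
    using zeck_val_surj[of m m] Suc_le_fibF[of m] by auto
  define ys where "ys = dropWhile ((=) 0) xs"
  have ys: "zeck_adm ys" "zeck_val ys = m"
    using xs zeck_adm_dropWhile_0 unfolding ys_def by auto
  with \<open>0 < m\<close> have "ys \<noteq> []" by auto
  moreover have "hd ys \<noteq> 0"
    using hd_dropWhile[of "(=) 0" xs] calculation unfolding ys_def by auto
  moreover have "hd ys \<le> 1"
    using ys(1) hd_in_set[OF calculation(1)] by (auto simp: zeck_adm_iff_nth)
  ultimately show ?thesis using ys by (auto simp: zeck_rep_iff hd_conv_nth)
qed

lemma zeck_rep_fibF_bounds: "zeck_rep m xs \<Longrightarrow> fibF (length xs) \<le> m \<and> m < fibF (Suc (length xs))"
  by (cases xs) (auto simp: zeck_rep_iff dest: zeck_val_less)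

lemma zeck_rep_unique: "zeck_rep m xs \<Longrightarrow> zeck_rep m ys \<Longrightarrow> xs = ys"
proof -
  assume xs: "zeck_rep m xs" and ys: "zeck_rep m ys"
  have "length xs = length ys"
  proof (rule ccontr)
    assume "length xs \<noteq> length ys"
    then have "Suc (length xs) \<le> length ys \<or> Suc (length ys) \<le> length xs" by auto
    then show False
      using zeck_rep_fibF_bounds[OF xs] zeck_rep_fibF_bounds[OF ys] monoD[OF mono_fibF]
      by (meson leD le_trans)
  qed
  then show ?thesis using zeck_val_inj xs ys by (auto simp: zeck_rep_iff)
qed

lemma zeck_rep_zeck: "0 < m \<Longrightarrow> zeck_rep m (zeck m)"
  unfolding zeck_def using zeck_rep_exists zeck_rep_unique by (metis theI)

section \<open>Values of digit sequences in base \<open>\<omega>\<close>\<close>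

lemma gphi_gt_1: "1 < gphi"
  unfolding gphi_def by simp

lemma gomega_pos: "0 < gomega"
  using gphi_gt_1 by (simp add: gomega_def)

lemma gomega_lt_1: "gomega < 1"
  using gphi_gt_1 by (simp add: gomega_def)

lemma gphi_gomega: "gphi * gomega = 1"
  using gphi_gt_1 by (simp add: gomega_def)

lemma gomega_golden: "gomega * (1 + gomega) = 1"
proof -
  have "gphi * gphi = gphi + 1"
    unfolding gphi_def by (simp add: field_simps)
  then show ?thesis
    using gphi_gt_1 unfolding gomega_def by (simp add: field_simps)
qed

lemma blk_val_Nil [simp]: "blk_val [] = 0"
  by (simp add: blk_val_def)

lemma blk_val_Cons [simp]: "blk_val (x # xs) = real x + gomega * blk_val xs"
  unfolding blk_val_def length_Cons sum.lessThan_Suc_shift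
  by (simp add: sum_distrib_left algebra_simps)

lemma blk_val_less: "zeck_adm xs \<Longrightarrow> blk_val xs < 1 + gomega"
proof (induction xs rule: induct_list012)
  case (3 x y ys)
  show ?case
  proof (cases "x = 0")
    case True
    then have "blk_val (x # y # ys) < gomega * (1 + gomega)"
      using 3 gomega_pos by simp
    then show ?thesis using gomega_golden gomega_pos by simp
  next
    case False
    then have "x = 1" "y = 0" "zeck_adm ys" using "3.prems" by (auto simp: zeck_adm_Cons)
    then have "blk_val (x # y # ys) < 1 + gomega * gomega * (1 + gomega)"
      using 3 gomega_pos by simp
    then show ?thesis using gomega_golden by (simp add: mult.assoc)
  qed
qed (use gomega_pos in auto)

lemma Fstar_le_1: "a \<in> Fstar \<Longrightarrow> a k \<le> 1"
  unfolding Fstar_def by (cases k) (auto dest: spec[of _ k])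

lemma Fstar_no_11: "a \<in> Fstar \<Longrightarrow> a k * a (Suc k) = 0"
  unfolding Fstar_def by (cases k) (auto dest: spec[of _ k])

lemma zeck_adm_map_upt:
  assumes "a \<in> Fstar"
  shows "zeck_adm (map a [p..<q])"
proof -
  have "a k \<in> {0, 1}" for k
    using Fstar_le_1[OF assms, of k] by auto
  then have "set (map a [p..<q]) \<subseteq> {0, 1}"
    unfolding set_map by (rule image_subsetI)
  then show ?thesis
    using Fstar_no_11[OF assms] by (simp add: zeck_adm_iff_nth)
qed

lemma blk_val_map_upt: "blk_val (map a [p..<p + N]) = (\<Sum>k<N. real (a (p + k)) * gomega ^ k)"
  by (simp add: blk_val_def)

definition tail_val :: "(nat \<Rightarrow> nat) \<Rightarrow> nat \<Rightarrow> real" where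
  "tail_val a p = (\<Sum>k. real (a (p + k)) * gomega ^ k)"

lemma seq_val_eq_tail_val: "seq_val a = tail_val a 1"
  unfolding seq_val_def tail_val_def by simp

lemma summable_tail_val:
  assumes "a \<in> Fstar"
  shows "summable (\<lambda>k. real (a (p + k)) * gomega ^ k)"
proof (rule summable_comparison_test)
  show "\<exists>N. \<forall>k\<ge>N. norm (real (a (p + k)) * gomega ^ k) \<le> gomega ^ k"
    using Fstar_le_1[OF assms] gomega_pos by (auto intro!: exI[of _ 0])
  show "summable (\<lambda>k. gomega ^ k)"
    using gomega_pos gomega_lt_1 by (intro summable_geometric) simp
qed

lemma tail_val_Suc:
  assumes "a \<in> Fstar"
  shows "tail_val a p = real (a p) + gomega * tail_val a (Suc p)"
proof -
  have "tail_val a p = real (a p) + (\<Sum>k. real (a (p + Suc k)) * gomega ^ Suc k)"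
    using suminf_split_head[OF summable_tail_val[OF assms, of p]] by (simp add: tail_val_def)
  also have "(\<Sum>k. real (a (p + Suc k)) * gomega ^ Suc k) = gomega * tail_val a (Suc p)"
    using suminf_mult[OF summable_tail_val[OF assms, of "Suc p"], of gomega]
    by (simp add: tail_val_def algebra_simps)
  finally show ?thesis .
qed

lemma tail_val_nonneg: "a \<in> Fstar \<Longrightarrow> 0 \<le> tail_val a p"
  unfolding tail_val_def using gomega_pos by (intro suminf_nonneg summable_tail_val) auto

lemma tail_val_le:
  assumes "a \<in> Fstar"
  shows "tail_val a p \<le> 1 + gomega"
  unfolding tail_val_def
proof (rule suminf_le_const[OF summable_tail_val[OF assms]])
  fix N
  show "(\<Sum>k<N. real (a (p + k)) * gomega ^ k) \<le> 1 + gomega"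
    using blk_val_less[OF zeck_adm_map_upt[OF assms, of p "p + N"]] blk_val_map_upt[of a p N]
    by linarith
qed

lemma tail_val_10:
  assumes "a \<in> Fstar" "a p = 1"
  shows "tail_val a p = 1 + gomega * gomega * tail_val a (Suc (Suc p))"
proof -
  have "a (Suc p) = 0"
    using Fstar_no_11[OF assms(1), of p] assms(2) by simp
  then show ?thesis
    using tail_val_Suc[OF assms(1), of p] tail_val_Suc[OF assms(1), of "Suc p"] assms(2) by simp
qed

lemma tail_val_0_le_1:
  assumes "a \<in> Fstar" "a p = 0"
  shows "tail_val a p \<le> 1"
proof -
  have "tail_val a p = gomega * tail_val a (Suc p)"
    using tail_val_Suc[OF assms(1), of p] assms(2) by simp
  also have "\<dots> \<le> gomega * (1 + gomega)"
    using tail_val_le[OF assms(1)] gomega_pos by simp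
  finally show ?thesis using gomega_golden by simp
qed

lemma tail_val_less_if_not_10:
  assumes "a \<in> Fstar" "\<not> (a (p + 2 * i) = 1 \<and> a (Suc (p + 2 * i)) = 0)"
  shows "tail_val a p < 1 + gomega"
  using assms(2)
proof (induction i arbitrary: p)
  case 0
  have "a (Suc p) = 0" if "a p = 1"
    using Fstar_no_11[OF assms(1), of p] that by simp
  then have "a p = 0"
    using 0 Fstar_le_1[OF assms(1), of p] by auto
  then show ?case
    using tail_val_0_le_1[OF assms(1), of p] gomega_pos by linarith
next
  case (Suc i)
  show ?case
  proof (cases "a p = 0")
    case True
    then show ?thesis using tail_val_0_le_1[OF assms(1) True] gomega_pos by linarith
  next
    case False
    then have "a p = 1"
      using Fstar_le_1[OF assms(1), of p] by simp
    moreover have "tail_val a (Suc (Suc p)) < 1 + gomega"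
      using Suc.IH[of "Suc (Suc p)"] Suc.prems by simp
    ultimately have "tail_val a p < 1 + gomega * gomega * (1 + gomega)"
      using tail_val_10[OF assms(1)] gomega_pos by simp
    then show ?thesis using gomega_golden by (simp add: mult.assoc)
  qed
qed

lemma tail_val_less:
  assumes "a \<in> Fstar"
  shows "tail_val a p < 1 + gomega"
proof -
  have "\<exists>i. \<not> (a (p + 2 * i) = 1 \<and> a (Suc (p + 2 * i)) = 0)"
  proof (cases "p = 0")
    case True
    then show ?thesis using assms by (intro exI[of _ 0]) (simp add: Fstar_def)
  next
    case False
    then show ?thesis using assms unfolding Fstar_def by auto
  qed
  then show ?thesis using tail_val_less_if_not_10[OF assms] by blast
qed

lemma tail_val_less_1_iff:
  assumes "a \<in> Fstar"
  shows "tail_val a p < 1 \<longleftrightarrow> a p = 0"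
proof
  assume "a p = 0"
  then have "tail_val a p = gomega * tail_val a (Suc p)"
    using tail_val_Suc[OF assms, of p] by simp
  also have "\<dots> < gomega * (1 + gomega)"
    using tail_val_less[OF assms] gomega_pos by simp
  finally show "tail_val a p < 1" using gomega_golden by simp
next
  have "1 \<le> tail_val a p" if "a p \<noteq> 0"
  proof -
    have "a p = 1" using that Fstar_le_1[OF assms, of p] by simp
    then show ?thesis
      using tail_val_Suc[OF assms, of p] tail_val_nonneg[OF assms, of "Suc p"] gomega_pos by simp
  qed
  then show "tail_val a p < 1 \<Longrightarrow> a p = 0" by fastforce
qed

lemma tail_val_eq_imp_digit_eq:
  assumes "a \<in> Fstar" "b \<in> Fstar" "tail_val a p = tail_val b p"
  shows "a p = b p"
proof -
  have "a p = 0 \<longleftrightarrow> b p = 0"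
    using tail_val_less_1_iff assms by metis
  then show ?thesis
    using Fstar_le_1[OF assms(1), of p] Fstar_le_1[OF assms(2), of p] by linarith
qed

lemma tail_val_eq_imp_eq:
  assumes "a \<in> Fstar" "b \<in> Fstar" "tail_val a p = tail_val b p"
  shows "a (p + j) = b (p + j)"
  using assms(3)
proof (induction j arbitrary: p)
  case 0
  then show ?case using tail_val_eq_imp_digit_eq[OF assms(1,2)] by simp
next
  case (Suc j)
  have "a p = b p"
    using tail_val_eq_imp_digit_eq[OF assms(1,2) Suc.prems] .
  then have "tail_val a (Suc p) = tail_val b (Suc p)"
    using tail_val_Suc[OF assms(1), of p] tail_val_Suc[OF assms(2), of p] Suc.prems gomega_pos by simp
  then show ?case
    using Suc.IH[of "Suc p"] by simp
qed

lemma seq_val_inj: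
  assumes "a \<in> Fstar" "b \<in> Fstar" "seq_val a = seq_val b"
  shows "a = b"
proof
  fix k
  show "a k = b k"
  proof (cases k)
    case 0
    then show ?thesis using assms(1,2) by (simp add: Fstar_def)
  next
    case (Suc j)
    then show ?thesis
      using tail_val_eq_imp_eq[OF assms(1,2), of 1 j] assms(3) by (simp add: seq_val_eq_tail_val)
  qed
qed

lemma seq_val_eq_blk_val_restr:
  assumes "\<forall>k>t. mu k = 0"
  shows "seq_val mu = blk_val (restr mu t)"
proof -
  have "seq_val mu = (\<Sum>k<t. real (mu (Suc k)) * gomega ^ k)"
    unfolding seq_val_def using assms by (intro suminf_finite) auto
  then show ?thesis
    unfolding blk_val_def restr_def by (simp del: upt_Suc)
qed

section \<open>Frequencies of leading blocks\<close>

lemma length_LB: "has_LB s m \<Longrightarrow> length (LB s m) = s"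
  by (simp add: has_LB_def LB_def)

lemma set_LB: "0 < m \<Longrightarrow> set (LB s m) \<subseteq> {0, 1}"
  using zeck_rep_zeck[of m] set_take_subset[of s "zeck m"]
  by (auto simp: LB_def zeck_rep_iff zeck_adm_iff_nth)

lemma LB_1: "0 < m \<Longrightarrow> has_LB 1 m \<and> LB 1 m = [1]"
  using zeck_rep_zeck[of m] by (cases "zeck m") (auto simp: has_LB_def LB_def zeck_rep_iff)

lemma blk_le_take: "blk_le b c \<Longrightarrow> blk_le (take t b) (take t c)"
  unfolding blk_le_def
proof (elim disjE exE conjE)
  fix i assume i: "i < length b" "take i b = take i c" "b ! i < c ! i"
  show "take t b = take t c \<or>
    (\<exists>i<length (take t b). take i (take t b) = take i (take t c) \<and> take t b ! i < take t c ! i)"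
  proof (cases "i < t")
    case True
    then show ?thesis using i by (intro disjI2 exI[of _ i]) (auto simp: min_def)
  next
    case False
    then have "take t b = take t (take i b)" "take t c = take t (take i c)" by (auto simp: min_def)
    then show ?thesis using i by simp
  qed
qed simp

lemma take_restr: "t \<le> s \<Longrightarrow> take t (restr mu s) = restr mu t"
  by (simp add: restr_def take_map take_upt del: upt_Suc)

lemma cnt_le_restr_antimono: "t \<le> s \<Longrightarrow> cnt_le K s (restr mu s) n \<le> cnt_le K t (restr mu t) n"
  unfolding cnt_le_def
proof (intro card_mono subsetI)
  fix k assume "t \<le> s" and k: "k \<in> {k \<in> {1..n}. has_LB s (K k) \<and> blk_le (LB s (K k)) (restr mu s)}"
  then have "LB t (K k) = take t (LB s (K k))" by (simp add: LB_def min_def)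
  then show "k \<in> {k \<in> {1..n}. has_LB t (K k) \<and> blk_le (LB t (K k)) (restr mu t)}"
    using k \<open>t \<le> s\<close> blk_le_take[of "LB s (K k)" "restr mu s" t] take_restr[of t s mu]
    by (auto simp: has_LB_def)
qed simp

lemma cnt_eq_1:
  assumes "\<forall>k\<ge>1. 0 < K k"
  shows "cnt_eq K 1 c n = (if c = [1] then n else 0)"
proof -
  have "{k \<in> {1..n}. has_LB 1 (K k) \<and> LB 1 (K k) = c} = (if c = [1] then {1..n} else {})"
    using assms LB_1 by auto
  then show ?thesis by (simp add: cnt_eq_def)
qed

lemma cnt_le_eq_sum_cnt_eq:
  assumes "\<forall>k\<ge>1. 0 < K k"
  shows "cnt_le K s b n = (\<Sum>c\<in>{c. length c = s \<and> set c \<subseteq> {0, 1} \<and> blk_le c b}. cnt_eq K s c n)"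
proof -
  define C where "C = {c. length c = s \<and> set c \<subseteq> {0, 1::nat} \<and> blk_le c b}"
  define A where "A = {k \<in> {1..n}. has_LB s (K k) \<and> blk_le (LB s (K k)) b}"
  have "C \<subseteq> {c. set c \<subseteq> {0, 1} \<and> length c = s}"
    unfolding C_def by auto
  then have "finite C"
    by (rule finite_subset) (simp add: finite_lists_length_eq)
  moreover have "(\<lambda>k. LB s (K k)) ` A \<subseteq> C"
  proof safe
    fix k assume "k \<in> A"
    then show "LB s (K k) \<in> C"
      using assms length_LB set_LB[of "K k" s] unfolding A_def C_def by auto
  qed
  ultimately have "card A = (\<Sum>c\<in>C. card {k \<in> A. LB s (K k) = c})"
    using sum.group[of A C "\<lambda>k. LB s (K k)" "\<lambda>_. 1::nat"] by (simp add: A_def)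
  also have "\<dots> = (\<Sum>c\<in>C. cnt_eq K s c n)"
  proof (rule sum.cong)
    fix c assume "c \<in> C"
    then have "{k \<in> A. LB s (K k) = c} = {k \<in> {1..n}. has_LB s (K k) \<and> LB s (K k) = c}"
      unfolding A_def C_def by auto
    then show "card {k \<in> A. LB s (K k) = c} = cnt_eq K s c n"
      by (simp add: cnt_eq_def)
  qed simp
  finally show ?thesis by (simp add: cnt_le_def A_def C_def)
qed

lemma cnt_eq_ratio_convergent:
  assumes "cont_LBD K" "1 \<le> s"
  shows "convergent (\<lambda>n. real (cnt_eq K s c n) / real n)"
proof (cases "s = 1")
  case True
  have "\<forall>k\<ge>1. 0 < K k"
    using assms(1) by (simp add: cont_LBD_def)
  then have "(\<lambda>n. real (cnt_eq K s c n) / real n) = (if c = [1] then (\<lambda>n. real n / real n) else (\<lambda>_. 0))"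
    using True cnt_eq_1 by auto
  moreover have "(\<lambda>n. real n / real n) \<longlonglongrightarrow> 1"
    by (rule tendsto_eventually) (auto simp: eventually_sequentially intro: exI[of _ 1])
  ultimately show ?thesis by (auto simp: convergent_def)
next
  case False
  show ?thesis
  proof (cases "is_leading_block s c")
    case True
    then show ?thesis using assms \<open>s \<noteq> 1\<close> unfolding cont_LBD_def by simp
  next
    case False
    then have "\<And>n. cnt_eq K s c n = 0"
      unfolding cnt_eq_def is_leading_block_def by auto
    then show ?thesis by (simp add: convergent_const)
  qed
qed

lemma cnt_le_ratio_convergent:
  assumes "cont_LBD K" "1 \<le> s"
  shows "convergent (\<lambda>n. real (cnt_le K s b n) / real n)"
proof -
  have "\<forall>k\<ge>1. 0 < K k"
    using assms(1) by (simp add: cont_LBD_def)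
  then show ?thesis
    using cnt_eq_ratio_convergent[OF assms]
    by (simp add: cnt_le_eq_sum_cnt_eq sum_divide_distrib convergent_sum)
qed

lemma lim_cnt_le_restr_antimono:
  assumes "cont_LBD K" "1 \<le> t" "t \<le> s"
  shows "lim (\<lambda>n. real (cnt_le K s (restr mu s) n) / real n)
           \<le> lim (\<lambda>n. real (cnt_le K t (restr mu t) n) / real n)"
proof (rule lim_mono)
  show "(\<lambda>n. real (cnt_le K s (restr mu s) n) / real n)
          \<longlonglongrightarrow> lim (\<lambda>n. real (cnt_le K s (restr mu s) n) / real n)"
    using cnt_le_ratio_convergent[OF assms(1)] assms(2,3) by (simp add: convergent_LIMSEQ_iff)
  show "(\<lambda>n. real (cnt_le K t (restr mu t) n) / real n)
          \<longlonglongrightarrow> lim (\<lambda>n. real (cnt_le K t (restr mu t) n) / real n)"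
    using cnt_le_ratio_convergent[OF assms(1,2)] by (simp add: convergent_LIMSEQ_iff)
  show "real (cnt_le K s (restr mu s) n) / real n \<le> real (cnt_le K t (restr mu t) n) / real n" for n
    using cnt_le_restr_antimono[OF assms(3)] by (simp add: divide_right_mono)
qed

lemma limfun_le_lim_cnt_le:
  assumes "cont_LBD K" "mu \<in> Fstar" "mu 1 = 1" "1 \<le> t"
  shows "limfun K mu \<le> lim (\<lambda>n. real (cnt_le K t (restr mu t) n) / real n)"
proof -
  have "convergent (\<lambda>s. lim (\<lambda>n. real (cnt_le K s (restr mu s) n) / real n))"
    using assms(1-3) unfolding cont_LBD_def by blast
  then show ?thesis
    unfolding limfun_def convergent_LIMSEQ_iff
    by (rule LIMSEQ_le_const2) (use lim_cnt_le_restr_antimono[OF assms(1,4)] in blast)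
qed

lemma lim_cnt_le_nonneg:
  assumes "cont_LBD K" "1 \<le> t"
  shows "0 \<le> lim (\<lambda>n. real (cnt_le K t b n) / real n)"
  using cnt_le_ratio_convergent[OF assms] unfolding convergent_LIMSEQ_iff
  by (rule LIMSEQ_le_const) simp

lemma fKstar_seq_val:
  assumes "mu \<in> Fstar" "mu 1 = 1" "seq_val mu \<noteq> 1"
  shows "fKstar K (gphi * (seq_val mu - 1)) = limfun K mu"
proof -
  have "gphi * (seq_val mu - 1) \<noteq> 0"
    using assms(3) gphi_gt_1 by simp
  moreover have "gphi * (seq_val mu - 1) < gphi * gomega"
    using tail_val_less[OF assms(1), of 1] gphi_gt_1 by (simp add: seq_val_eq_tail_val)
  moreover have "(THE nu. nu \<in> Fstar \<and> nu 1 = 1 \<and> gphi * (seq_val nu - 1) = gphi * (seq_val mu - 1)) = mu"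
    using assms(1,2) gphi_gt_1 seq_val_inj[OF _ assms(1)] by (intro the_equality) auto
  ultimately show ?thesis
    using gphi_gomega by (simp add: fKstar_def)
qed

theorem lemma5p17:
  fixes K :: "nat \<Rightarrow> nat" and mu :: "nat \<Rightarrow> nat" and t :: nat
  assumes "cont_LBD K"
    and "mu \<in> Fstar" and "mu 1 = 1"
    and "\<forall>k>t. mu k = 0"
  shows "fKstar K (gphi * (blk_val (restr mu t) - 1))
           \<le> lim (\<lambda>n. real (cnt_le K t (restr mu t) n) / real n)"
proof -
  have "1 \<le> t"
    using assms(3,4) by (cases t) auto
  have "blk_val (restr mu t) = seq_val mu"
    using seq_val_eq_blk_val_restr[OF assms(4)] by simp
  moreover have "fKstar K (gphi * (seq_val mu - 1)) \<le> lim (\<lambda>n. real (cnt_le K t (restr mu t) n) / real n)"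
  proof (cases "seq_val mu = 1")
    case True
    then show ?thesis
      using lim_cnt_le_nonneg[OF assms(1) \<open>1 \<le> t\<close>] by (simp add: fKstar_def)
  next
    case False
    then show ?thesis
      using fKstar_seq_val[OF assms(2,3)] limfun_le_lim_cnt_le[OF assms(1-3) \<open>1 \<le> t\<close>] by simp
  qed
  ultimately show ?thesis by simp
qed

end
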